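(* Let $f\in M^1$, let $\Delta\subset\mathbb{R}^2$ be measurable, let $N\in L^1(\mathbb{R}^2)$ with $\Vert N\Vert_1\le\varepsilon$, and suppose one observes $H=P_{\Delta^c}(V_\varphi f+N)$. Assume that for some $R>0$, \[ \rho(\Delta,R)<1-e^{-\pi/R^2}. \] Then any solution $\sigma(H)$ of \[ \sigma(H)=\arg\min_{h\in M^1}\Vert P_{\Delta^c}(H-V_\varphi h)\Vert_1 \] satisfies \[ \left\Vert V_\varphi\big(f-\sigma(H)\big)\right\Vert_1\le \frac{2\varepsilon\,(1-e^{-\pi/R^2})}{1-e^{-\pi/R^2}-\rho(\Delta,R)}. \]
   Context: Let $\varphi(t)=2^{1/4}e^{-\pi t^2}$. The STFT is $V_\varphi f(x,\omega)=\int_{\mathbb{R}} f(t)\overline{\varphi(t-x)}e^{-2\pi i \omega t}\,dt$. The modulation space $M^1$ is $\{f\in\mathcal{S}'(\mathbb{R}): \Vert V_\varphi f\Vert_{1}<\infty\}$, with $\Vert\cdot\Vert_1$ the $L^1(\mathbb{R}^2)$ norm. For $A\subset\mathbb{R}^2$, $P_A$ is multiplication by $\chi_A$, and $\Delta^c=\mathbb{R}^2\setminus\Delta$. The planar maximum Nyquist density is $\rho(\Delta,R):=\sup_{z\in\mathbb{R}^2}|\Delta\cap(z+D_{1/R})|$, with $D_{1/R}$ the disc of radius $1/R$ centered at the origin and $|\cdot|$ Lebesgue measure. *)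

theory Defs
  imports "HOL-Analysis.Analysis"
begin

definition gauss_window :: "real \<Rightarrow> complex" where
  "gauss_window t = complex_of_real (2 powr (1/4) * exp (- pi * t\<^sup>2))"

definition stft :: "(real \<Rightarrow> complex) \<Rightarrow> real \<times> real \<Rightarrow> complex" where
  "stft f = (\<lambda>(x, \<omega>). integral\<^sup>L lebesgue
      (\<lambda>t. f t * cnj (gauss_window (t - x)) * exp (- 2 * pi * \<i> * complex_of_real (\<omega> * t))))"

definition L1norm :: "(real \<times> real \<Rightarrow> complex) \<Rightarrow> ennreal" where
  "L1norm g = (\<integral>\<^sup>+ z. ennreal (norm (g z)) \<partial>lebesgue)"

definition M1 :: "(real \<Rightarrow> complex) set" where
  "M1 = {f. integrable lebesgue f \<and> stft f \<in> borel_measurable lebesgue \<and> L1norm (stft f) < \<infinity>}"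

definition proj :: "(real \<times> real) set \<Rightarrow> (real \<times> real \<Rightarrow> complex) \<Rightarrow> real \<times> real \<Rightarrow> complex" where
  "proj A g = (\<lambda>z. indicator A z * g z)"

definition nyquist_density :: "(real \<times> real) set \<Rightarrow> real \<Rightarrow> real" where
  "nyquist_density \<Delta> R = (SUP z. measure lebesgue (\<Delta> \<inter> ball z (1 / R)))"

end

theory Submission
  imports Defs "HOL-Complex_Analysis.Complex_Analysis"
begin

text \<open>Up to the factor $2^{1/4}$, a phase and the Gaussian $e^{-\pi(p^2+q^2)/2}$, the value
  $V_\varphi g(a+p, b+q)$ is an entire function of $p - iq$. Its mean value property on circles,
  weighted by $e^{-\pi |u|^2}$ over a disc and averaged over rotations, gives the local estimate
  $(1 - e^{-\pi r^2})\,|V_\varphi g(w)| \le \int_{B(w,r)} |V_\varphi g|$. Integrating it over $\Delta$ and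
  exchanging the integrals yields $(1 - e^{-\pi/R^2})\,\|P_\Delta V_\varphi g\|_1 \le \rho(\Delta,R)\,\|V_\varphi g\|_1$.
  For $g = f - \sigma(H)$ the minimality of $\sigma(H)$ and the triangle inequality bound
  $\|P_{\Delta^c} V_\varphi g\|_1$ by $2\varepsilon$, and the two estimates combine to the claim.\<close>

section \<open>The STFT with Gaussian window as an entire function\<close>

lemma holomorphic_circle_mean:
  assumes hol: "f holomorphic_on UNIV"
  shows "(LINT s:{0..1}|lborel. f (cis (2 * pi * s))) = f 0"
proof -
  let ?c = "2 * complex_of_real pi * \<i>"
  have circle: "cis (2 * pi * s) = circlepath 0 1 s" for s
    by (simp add: circlepath cis_conv_exp mult_ac)
  have "((\<lambda>u. f u / (u - 0)) has_contour_integral ?c * f 0) (circlepath 0 1)"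
    by (rule Cauchy_integral_circlepath_simple) (auto intro: holomorphic_on_subset[OF hol])
  then have "((\<lambda>s. ?c * f (cis (2 * pi * s))) has_integral ?c * f 0) {0..1}"
    unfolding has_contour_integral_def
    by (rule has_integral_spike_finite[OF finite.emptyI, rotated])
       (clarsimp simp: circle, subst vector_derivative_circlepath01, auto simp: circlepath)
  then have mean: "((\<lambda>s. f (cis (2 * pi * s))) has_integral f 0) {0..1}"
    by (subst (asm) has_integral_mult_right_iff) auto
  have "continuous_on {0..1::real} (\<lambda>s. f (cis (2 * pi * s)))"
    by (rule continuous_on_compose2[OF holomorphic_on_imp_continuous_on[OF hol]])
      (auto intro!: continuous_intros)
  then have "set_integrable lborel {0..1::real} (\<lambda>s. f (cis (2 * pi * s)))"
    unfolding set_integrable_def by (intro borel_integrable_compact) auto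
  from set_borel_integral_eq_integral(2)[OF this] show ?thesis
    using integral_unique[OF mean] by simp
qed

lemma borel_measurable_cnj [measurable]:
  "f \<in> borel_measurable M \<Longrightarrow> (\<lambda>x. cnj (f x)) \<in> borel_measurable M"
  by (rule borel_measurable_continuous_on[where f=cnj]) (auto intro: continuous_intros)

lemma borel_measurable_cis [measurable]: "cis \<in> borel_measurable borel"
  by (intro borel_measurable_continuous_onI continuous_intros)

lemma borel_measurable_gauss_window [measurable]: "gauss_window \<in> borel_measurable borel"
  unfolding gauss_window_def by measurable

lemma borel_measurable_fst_snd_plane [measurable]:
  "(fst :: real \<times> real \<Rightarrow> real) \<in> borel_measurable borel"
  "(snd :: real \<times> real \<Rightarrow> real) \<in> borel_measurable borel"
  by (intro borel_measurable_continuous_onI continuous_intros)+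

lemma borel_measurable_stft [measurable]:
  assumes [measurable]: "g \<in> borel_measurable borel"
  shows "stft g \<in> borel_measurable borel"
proof -
  define k where "k z t = g t * cnj (gauss_window (t - fst z)) * exp (- 2 * pi * \<i> * complex_of_real (snd z * t))"
    for z :: "real \<times> real" and t
  have "stft g = (\<lambda>z. LINT t|lborel. k z t)"
    unfolding stft_def k_def by (rule ext, simp add: split_beta, rule integral_completion) measurable
  moreover have "(\<lambda>(z, t). k z t) \<in> borel_measurable (borel \<Otimes>\<^sub>M lborel)"
    unfolding k_def by measurable
  ultimately show ?thesis
    using lborel.borel_measurable_lebesgue_integral[of k borel] by simp
qed

text \<open>Removing the Gaussian damping and a phase from the STFT near $(a, b)$ leaves an entire
  function of $p - i q$, a Bargmann transform of $g$.\<close>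

definition bargmann_kernel :: "real \<Rightarrow> real \<Rightarrow> real \<Rightarrow> complex \<Rightarrow> complex" where
  "bargmann_kernel a b t \<xi> = exp (- complex_of_real (pi * (t - a)\<^sup>2)
      - 2 * complex_of_real pi * \<i> * complex_of_real (b * t)
      + 2 * complex_of_real (pi * (t - a)) * \<xi> - complex_of_real pi * \<xi>\<^sup>2 / 2)"

definition bargmann :: "(real \<Rightarrow> complex) \<Rightarrow> real \<Rightarrow> real \<Rightarrow> complex \<Rightarrow> complex" where
  "bargmann g a b \<xi> = (LINT t|lborel. g t * bargmann_kernel a b t \<xi>)"

lemma borel_measurable_bargmann_kernel [measurable]:
  assumes [measurable]: "T \<in> borel_measurable M" "X \<in> borel_measurable M"
  shows "(\<lambda>x. bargmann_kernel a b (T x) (X x)) \<in> borel_measurable M"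
  unfolding bargmann_kernel_def by measurable

lemma holomorphic_bargmann_kernel: "(\<lambda>\<zeta>. bargmann_kernel a b t (\<zeta> * \<xi>)) holomorphic_on UNIV"
  unfolding bargmann_kernel_def by (intro holomorphic_intros) auto

lemma norm_bargmann_kernel_le: "norm (bargmann_kernel a b t \<xi>) \<le> exp (pi * (norm \<xi>)\<^sup>2 / 2)"
proof -
  have "- pi * (t - a)\<^sup>2 + 2 * pi * (t - a) * Re \<xi> - pi * ((Re \<xi>)\<^sup>2 - (Im \<xi>)\<^sup>2) / 2
      = - pi * (t - a - Re \<xi>)\<^sup>2 + pi * (norm \<xi>)\<^sup>2 / 2"
    using cmod_power2[of \<xi>] by (simp add: power2_eq_square field_simps)
  also have "\<dots> \<le> pi * (norm \<xi>)\<^sup>2 / 2"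
    by simp
  finally show ?thesis
    unfolding bargmann_kernel_def norm_exp_eq_Re by (simp add: power2_eq_square)
qed

lemma gauss_window_modulation_eq:
  "cnj (gauss_window (t - (a + p))) * exp (- 2 * pi * \<i> * complex_of_real ((b + q) * t))
   = complex_of_real (2 powr (1/4)) * exp (- \<i> * complex_of_real (pi * p * q + 2 * pi * a * q))
       * exp (complex_of_real (- (pi * (p\<^sup>2 + q\<^sup>2) / 2))) * bargmann_kernel a b t (Complex p (- q))"
proof -
  have window: "cnj (gauss_window (t - (a + p)))
      = complex_of_real (2 powr (1/4)) * exp (complex_of_real (- pi * (t - (a + p))\<^sup>2))"
    unfolding gauss_window_def
    by (simp only: of_real_mult[symmetric] exp_of_real complex_cnj_complex_of_real)
  have "complex_of_real (- pi * (t - (a + p))\<^sup>2) + complex_of_real (- 2 * pi) * \<i> * complex_of_real ((b + q) * t)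
     = - \<i> * complex_of_real (pi * p * q + 2 * pi * a * q) + complex_of_real (- (pi * (p\<^sup>2 + q\<^sup>2) / 2))
       + (- complex_of_real (pi * (t - a)\<^sup>2) - 2 * complex_of_real pi * \<i> * complex_of_real (b * t)
          + 2 * complex_of_real (pi * (t - a)) * Complex p (- q) - complex_of_real pi * (Complex p (- q))\<^sup>2 / 2)"
    by (simp add: complex_eq_iff power2_eq_square field_simps)
  then show ?thesis
    unfolding window bargmann_kernel_def
    by (simp only: mult.assoc[of "complex_of_real (2 powr (1/4))"] exp_add[symmetric])
qed

lemma stft_eq_bargmann:
  assumes [measurable]: "g \<in> borel_measurable borel"
  shows "stft g (a + p, b + q) = complex_of_real (2 powr (1/4))
      * exp (- \<i> * complex_of_real (pi * p * q + 2 * pi * a * q))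
      * exp (complex_of_real (- (pi * (p\<^sup>2 + q\<^sup>2) / 2))) * bargmann g a b (Complex p (- q))"
proof -
  have "stft g (a + p, b + q) = (LINT t|lborel. g t * (cnj (gauss_window (t - (a + p)))
      * exp (- 2 * pi * \<i> * complex_of_real ((b + q) * t))))"
    unfolding stft_def by (simp add: mult.assoc, rule integral_completion) measurable
  then show ?thesis
    unfolding gauss_window_modulation_eq bargmann_def
    by (simp add: mult.left_commute[of "g _"] flip: integral_mult_right_zero)
qed

lemma norm_stft_eq_bargmann:
  assumes "g \<in> borel_measurable borel"
  shows "norm (stft g (a + p, b + q))
      = 2 powr (1/4) * exp (- (pi * (p\<^sup>2 + q\<^sup>2) / 2)) * norm (bargmann g a b (Complex p (- q)))"
  unfolding stft_eq_bargmann[OF assms] by (simp add: norm_mult norm_exp_eq_Re)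

lemma integrable_bargmann_circle_integrand:
  assumes [measurable]: "g \<in> borel_measurable borel" and "integrable lborel g"
  shows "integrable (lborel \<Otimes>\<^sub>M lborel)
    (\<lambda>(s, t). indicator {0..1::real} s *\<^sub>R (g t * bargmann_kernel a b t (cis (2 * pi * s) * \<xi>)))"
proof (rule integrableI_bounded)
  define C where "C = exp (pi * (norm \<xi>)\<^sup>2 / 2)"
  have "norm (indicator {0..1::real} s *\<^sub>R (g t * bargmann_kernel a b t (cis (2 * pi * s) * \<xi>)))
      \<le> indicator {0..1::real} s * (C * norm (g t))" for s t
    using norm_bargmann_kernel_le[of a b t "cis (2 * pi * s) * \<xi>"]
    by (auto simp: C_def norm_mult indicator_def mult_left_mono mult.commute)
  then have "(\<integral>\<^sup>+ x. ennreal (norm (case x of (s, t) \<Rightarrow>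
        indicator {0..1::real} s *\<^sub>R (g t * bargmann_kernel a b t (cis (2 * pi * s) * \<xi>)))) \<partial>(lborel \<Otimes>\<^sub>M lborel))
      \<le> (\<integral>\<^sup>+ x. ennreal (indicator {0..1::real} (fst x) * (C * norm (g (snd x)))) \<partial>(lborel \<Otimes>\<^sub>M lborel))"
    by (intro nn_integral_mono) (auto intro!: ennreal_leI)
  also have "\<dots> = (\<integral>\<^sup>+ s. indicator {0..1::real} s * (ennreal C * (\<integral>\<^sup>+ t. norm (g t) \<partial>lborel)) \<partial>lborel)"
    by (subst lborel.nn_integral_fst[symmetric], measurable)
      (auto intro!: nn_integral_cong simp: indicator_def C_def ennreal_mult nn_integral_cmult)
  also have "\<dots> = ennreal C * (\<integral>\<^sup>+ t. norm (g t) \<partial>lborel)"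
    by (subst nn_integral_multc) auto
  also have "\<dots> < \<infinity>"
    using assms(2) by (simp add: integrable_iff_bounded ennreal_mult_less_top)
  finally show "(\<integral>\<^sup>+ x. ennreal (norm (case x of (s, t) \<Rightarrow>
      indicator {0..1::real} s *\<^sub>R (g t * bargmann_kernel a b t (cis (2 * pi * s) * \<xi>)))) \<partial>(lborel \<Otimes>\<^sub>M lborel)) < \<infinity>" .
qed measurable

lemma bargmann_circle_mean:
  assumes [measurable]: "g \<in> borel_measurable borel" and "integrable lborel g"
  shows "set_integrable lborel {0..1} (\<lambda>s. bargmann g a b (cis (2 * pi * s) * \<xi>))"
    and "(LINT s:{0..1}|lborel. bargmann g a b (cis (2 * pi * s) * \<xi>)) = bargmann g a b 0"
proof -
  define K where "K s t = indicator {0..1::real} s *\<^sub>R (g t * bargmann_kernel a b t (cis (2 * pi * s) * \<xi>))"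
    for s t
  have K_integrable: "integrable (lborel \<Otimes>\<^sub>M lborel) (\<lambda>(s, t). K s t)"
    unfolding K_def using assms by (rule integrable_bargmann_circle_integrand)
  have inner_K: "(\<lambda>s. LINT t|lborel. K s t) = (\<lambda>s. indicator {0..1::real} s *\<^sub>R bargmann g a b (cis (2 * pi * s) * \<xi>))"
    by (simp add: K_def bargmann_def)
  show "set_integrable lborel {0..1} (\<lambda>s. bargmann g a b (cis (2 * pi * s) * \<xi>))"
    unfolding set_integrable_def inner_K[symmetric] by (rule lborel_pair.integrable_fst[OF K_integrable])
  have "bargmann g a b 0 = (LINT t|lborel. g t * (LINT s:{0..1}|lborel. bargmann_kernel a b t (cis (2 * pi * s) * \<xi>)))"
    unfolding bargmann_def using holomorphic_circle_mean[OF holomorphic_bargmann_kernel] by simp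
  also have "\<dots> = (LINT t|lborel. LINT s|lborel. K s t)"
    unfolding K_def set_lebesgue_integral_def
    by (simp flip: integral_mult_right_zero add: mult.left_commute)
  also have "\<dots> = (LINT s|lborel. LINT t|lborel. K s t)"
    by (rule lborel_pair.Fubini_integral[OF K_integrable])
  finally show "(LINT s:{0..1}|lborel. bargmann g a b (cis (2 * pi * s) * \<xi>)) = bargmann g a b 0"
    unfolding set_lebesgue_integral_def inner_K by simp
qed

section \<open>Rotation invariance of planar Lebesgue measure\<close>

definition rotation :: "real \<Rightarrow> real \<times> real \<Rightarrow> real \<times> real" where
  "rotation \<phi> u = (cos \<phi> * fst u - sin \<phi> * snd u, sin \<phi> * fst u + cos \<phi> * snd u)"

lemma borel_measurable_rotation [measurable]:
  assumes [measurable]: "\<Theta> \<in> borel_measurable M" and U: "U \<in> borel_measurable M"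
  shows "(\<lambda>x. rotation (\<Theta> x) (U x)) \<in> borel_measurable M"
proof -
  have [measurable]: "U \<in> M \<rightarrow>\<^sub>M borel \<Otimes>\<^sub>M borel"
    using U by (simp add: borel_prod)
  show ?thesis
    unfolding borel_prod[symmetric] rotation_def by measurable
qed

lemma norm_rotation [simp]: "norm (rotation \<phi> u) = norm u"
proof -
  have "(c * p - d * q)\<^sup>2 + (d * p + c * q)\<^sup>2 = (d\<^sup>2 + c\<^sup>2) * (p\<^sup>2 + q\<^sup>2)" for c d p q :: real
    by (simp add: power2_eq_square algebra_simps)
  then show ?thesis
    by (simp add: rotation_def norm_prod_def)
qed

lemma rotation_zero [simp]: "rotation \<phi> 0 = 0"
  by (simp add: rotation_def zero_prod_def)

lemma rotation_rotation: "rotation \<alpha> (rotation \<beta> u) = rotation (\<alpha> + \<beta>) u"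
  by (simp add: rotation_def cos_add sin_add algebra_simps)

lemma cis_mult_Complex_conj_rotation:
  "cis \<phi> * Complex (fst u) (- snd u) = Complex (fst (rotation (- \<phi>) u)) (- snd (rotation (- \<phi>) u))"
  by (simp add: complex_eq_iff rotation_def algebra_simps)

definition shear_fst :: "real \<Rightarrow> real \<times> real \<Rightarrow> real \<times> real" where
  "shear_fst c z = (fst z + c * snd z, snd z)"

definition shear_snd :: "real \<Rightarrow> real \<times> real \<Rightarrow> real \<times> real" where
  "shear_snd c z = (fst z, snd z + c * fst z)"

lemma borel_measurable_shear [measurable]:
  "shear_fst c \<in> borel_measurable borel" "shear_snd c \<in> borel_measurable borel"
  unfolding shear_fst_def shear_snd_def by (intro borel_measurable_continuous_onI continuous_intros)+

lemma nn_integral_lborel_shear_fst: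
  fixes h :: "real \<times> real \<Rightarrow> ennreal"
  assumes [measurable]: "h \<in> borel_measurable borel"
  shows "(\<integral>\<^sup>+ z. h (shear_fst c z) \<partial>lborel) = (\<integral>\<^sup>+ z. h z \<partial>lborel)"
proof -
  have [measurable]: "h \<in> borel_measurable (lborel \<Otimes>\<^sub>M lborel)"
    by (simp add: lborel_prod)
  have sheared: "(\<lambda>z. h (shear_fst c z)) \<in> borel_measurable (lborel \<Otimes>\<^sub>M lborel)"
    unfolding shear_fst_def by measurable
  have "(\<integral>\<^sup>+ z. h (shear_fst c z) \<partial>(lborel \<Otimes>\<^sub>M lborel))
      = (\<integral>\<^sup>+ q. \<integral>\<^sup>+ p. h (p + c * q, q) \<partial>lborel \<partial>lborel)"
    using lborel_pair.nn_integral_snd[OF sheared] by (simp add: shear_fst_def)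
  also have "\<dots> = (\<integral>\<^sup>+ q. \<integral>\<^sup>+ p. h (p, q) \<partial>lborel \<partial>lborel)"
    using nn_integral_real_affine[of "\<lambda>p. h (p, _)" 1 "c * _"] by (simp add: add.commute)
  also have "\<dots> = (\<integral>\<^sup>+ z. h z \<partial>(lborel \<Otimes>\<^sub>M lborel))"
    using lborel_pair.nn_integral_snd[of h] by simp
  finally show ?thesis
    by (simp add: lborel_prod)
qed

lemma nn_integral_lborel_shear_snd:
  fixes h :: "real \<times> real \<Rightarrow> ennreal"
  assumes [measurable]: "h \<in> borel_measurable borel"
  shows "(\<integral>\<^sup>+ z. h (shear_snd c z) \<partial>lborel) = (\<integral>\<^sup>+ z. h z \<partial>lborel)"
proof -
  have [measurable]: "h \<in> borel_measurable (lborel \<Otimes>\<^sub>M lborel)"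
    by (simp add: lborel_prod)
  have sheared: "(\<lambda>z. h (shear_snd c z)) \<in> borel_measurable (lborel \<Otimes>\<^sub>M lborel)"
    unfolding shear_snd_def by measurable
  have "(\<integral>\<^sup>+ z. h (shear_snd c z) \<partial>(lborel \<Otimes>\<^sub>M lborel))
      = (\<integral>\<^sup>+ p. \<integral>\<^sup>+ q. h (p, q + c * p) \<partial>lborel \<partial>lborel)"
    using lborel.nn_integral_fst[OF sheared] by (simp add: shear_snd_def)
  also have "\<dots> = (\<integral>\<^sup>+ p. \<integral>\<^sup>+ q. h (p, q) \<partial>lborel \<partial>lborel)"
    using nn_integral_real_affine[of "\<lambda>q. h (_, q)" 1 "c * _"] by (simp add: add.commute)
  also have "\<dots> = (\<integral>\<^sup>+ z. h z \<partial>(lborel \<Otimes>\<^sub>M lborel))"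
    using lborel.nn_integral_fst[of h] by simp
  finally show ?thesis
    by (simp add: lborel_prod)
qed

text \<open>Paeth's decomposition of a rotation into three shears.\<close>

lemma rotation_eq_shears:
  assumes "cos \<phi> \<noteq> -1"
  shows "rotation \<phi> z
    = shear_fst (- sin \<phi> / (1 + cos \<phi>)) (shear_snd (sin \<phi>) (shear_fst (- sin \<phi> / (1 + cos \<phi>)) z))"
proof -
  define c where "c = - sin \<phi> / (1 + cos \<phi>)"
  have "1 + cos \<phi> \<noteq> 0"
    using assms by linarith
  then have "c * (1 + cos \<phi>) = - sin \<phi>"
    by (simp add: c_def)
  have "c * sin \<phi> * (1 + cos \<phi>) = (c * (1 + cos \<phi>)) * sin \<phi>"
    by (simp only: mult_ac)
  also have "\<dots> = - (sin \<phi>)\<^sup>2"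
    using \<open>c * (1 + cos \<phi>) = - sin \<phi>\<close> by (simp add: power2_eq_square)
  also have "\<dots> = (cos \<phi> - 1) * (1 + cos \<phi>)"
    using sin_squared_eq[of \<phi>] by (simp add: power2_eq_square algebra_simps)
  finally have "c * sin \<phi> * (1 + cos \<phi>) = (cos \<phi> - 1) * (1 + cos \<phi>)" .
  then have "1 + c * sin \<phi> = cos \<phi>"
    using \<open>1 + cos \<phi> \<noteq> 0\<close> by simp
  moreover have "fst z + c * snd z + c * (snd z + sin \<phi> * (fst z + c * snd z))
      = (1 + c * sin \<phi>) * fst z + c * (1 + cos \<phi>) * snd z + c * (1 + c * sin \<phi> - cos \<phi>) * snd z"
    by (simp add: algebra_simps)
  moreover have "snd z + sin \<phi> * (fst z + c * snd z) = sin \<phi> * fst z + (1 + c * sin \<phi>) * snd z"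
    by (simp add: algebra_simps)
  ultimately show ?thesis
    unfolding c_def[symmetric] rotation_def shear_fst_def shear_snd_def
    using \<open>c * (1 + cos \<phi>) = - sin \<phi>\<close> by simp
qed

lemma nn_integral_lborel_rotation:
  fixes h :: "real \<times> real \<Rightarrow> ennreal"
  assumes [measurable]: "h \<in> borel_measurable borel"
  shows "(\<integral>\<^sup>+ z. h (rotation \<phi> z) \<partial>lborel) = (\<integral>\<^sup>+ z. h z \<partial>lborel)"
proof -
  have small_angle: "(\<integral>\<^sup>+ z. k (rotation \<psi> z) \<partial>lborel) = (\<integral>\<^sup>+ z. k z \<partial>lborel)"
    if "cos \<psi> \<noteq> -1" and [measurable]: "k \<in> borel_measurable borel" for \<psi> k
  proof -
    define c where "c = - sin \<psi> / (1 + cos \<psi>)"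
    have "(\<integral>\<^sup>+ z. k (rotation \<psi> z) \<partial>lborel) = (\<integral>\<^sup>+ z. k (shear_fst c (shear_snd (sin \<psi>) z)) \<partial>lborel)"
      unfolding rotation_eq_shears[OF that(1)] c_def[symmetric]
      by (rule nn_integral_lborel_shear_fst[of "\<lambda>z. k (shear_fst c (shear_snd (sin \<psi>) z))"]) measurable
    also have "\<dots> = (\<integral>\<^sup>+ z. k (shear_fst c z) \<partial>lborel)"
      by (rule nn_integral_lborel_shear_snd[of "\<lambda>z. k (shear_fst c z)"]) measurable
    also have "\<dots> = (\<integral>\<^sup>+ z. k z \<partial>lborel)"
      by (rule nn_integral_lborel_shear_fst) measurable
    finally show ?thesis .
  qed
  show ?thesis
  proof (cases "cos \<phi> = -1")
    case True
    \<comment> \<open>the shear decomposition breaks down at angle \<open>\<pi>\<close>: rotate twice by \<open>\<phi> / 2\<close>\<close>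
    have "cos \<phi> = 2 * (cos (\<phi> / 2))\<^sup>2 - 1"
      using cos_double_cos[of "\<phi> / 2"] by simp
    with True have half: "cos (\<phi> / 2) \<noteq> -1"
      by auto
    have "(\<integral>\<^sup>+ z. h (rotation \<phi> z) \<partial>lborel) = (\<integral>\<^sup>+ z. h (rotation (\<phi> / 2) (rotation (\<phi> / 2) z)) \<partial>lborel)"
      by (simp add: rotation_rotation)
    also have "\<dots> = (\<integral>\<^sup>+ z. h (rotation (\<phi> / 2) z) \<partial>lborel)"
      by (rule small_angle[OF half]) measurable
    also have "\<dots> = (\<integral>\<^sup>+ z. h z \<partial>lborel)"
      by (rule small_angle[OF half assms])
    finally show ?thesis .
  qed (rule small_angle[OF _ assms])
qed

lemma nn_integral_lborel_rotation_average:
  fixes h :: "real \<times> real \<Rightarrow> ennreal" and \<Theta> :: "real \<Rightarrow> real"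
  assumes [measurable]: "h \<in> borel_measurable borel" "\<Theta> \<in> borel_measurable borel"
  shows "(\<integral>\<^sup>+ u. h u \<partial>lborel)
    = (\<integral>\<^sup>+ u. \<integral>\<^sup>+ s. indicator {0..1} s * h (rotation (\<Theta> s) u) \<partial>lborel \<partial>lborel)"
proof -
  have "(\<integral>\<^sup>+ u. h u \<partial>lborel) = (\<integral>\<^sup>+ s. indicator {0..1::real} s * (\<integral>\<^sup>+ u. h u \<partial>lborel) \<partial>lborel)"
    by (subst nn_integral_multc) auto
  also have "\<dots> = (\<integral>\<^sup>+ s. \<integral>\<^sup>+ u. indicator {0..1} s * h (rotation (\<Theta> s) u) \<partial>lborel \<partial>lborel)"
    by (simp add: nn_integral_lborel_rotation nn_integral_cmult)
  also have "\<dots> = (\<integral>\<^sup>+ u. \<integral>\<^sup>+ s. indicator {0..1} s * h (rotation (\<Theta> s) u) \<partial>lborel \<partial>lborel)"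
    by (rule lborel_pair.Fubini') measurable
  finally show ?thesis .
qed

section \<open>The Gaussian mass of a disc\<close>

lemma emeasure_lborel_ball_plane:
  "r \<ge> 0 \<Longrightarrow> emeasure lborel (ball (c :: real \<times> real) r) = ennreal (pi * r\<^sup>2)"
  using unit_ball_vol_even[of 1] by (simp add: emeasure_ball power2_eq_square)

lemma emeasure_lborel_cball_plane:
  "r \<ge> 0 \<Longrightarrow> emeasure lborel (cball (c :: real \<times> real) r) = ennreal (pi * r\<^sup>2)"
  using unit_ball_vol_even[of 1] by (simp add: emeasure_cball power2_eq_square)

lemma emeasure_ball_gaussian_sublevel:
  assumes r: "r \<ge> 0"
  shows "emeasure lborel {u :: real \<times> real. norm u < r \<and> pi * (norm u)\<^sup>2 \<le> t} = ennreal (min t (pi * r\<^sup>2))"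
proof -
  consider "t < 0" | "0 \<le> t" "t < pi * r\<^sup>2" | "pi * r\<^sup>2 \<le> t"
    by linarith
  then show ?thesis
  proof cases
    case 1
    then have empty: "{u :: real \<times> real. norm u < r \<and> pi * (norm u)\<^sup>2 \<le> t} = {}"
      by (smt (verit) Collect_empty_eq mult_nonneg_nonneg pi_ge_zero zero_le_power2)
    show ?thesis
      unfolding empty using 1 by (simp add: ennreal_neg)
  next
    case 2
    define \<rho> where "\<rho> = sqrt (t / pi)"
    have "\<rho> \<ge> 0" and \<rho>_sq: "pi * \<rho>\<^sup>2 = t"
      using 2 by (simp_all add: \<rho>_def)
    with 2 r have "\<rho> < r"
      by (metis mult_less_cancel_left_pos pi_gt_zero power_less_imp_less_base)
    have "pi * (norm u)\<^sup>2 \<le> t \<longleftrightarrow> norm u \<le> \<rho>" for u :: "real \<times> real"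
      using \<open>\<rho> \<ge> 0\<close> by (simp flip: \<rho>_sq add: power_mono_iff)
    with \<open>\<rho> < r\<close> have "{u :: real \<times> real. norm u < r \<and> pi * (norm u)\<^sup>2 \<le> t} = cball 0 \<rho>"
      by auto
    then show ?thesis
      using 2 \<rho>_sq \<open>\<rho> \<ge> 0\<close> by (simp add: emeasure_lborel_cball_plane)
  next
    case 3
    have "pi * (norm u)\<^sup>2 \<le> t" if "norm u < r" for u :: "real \<times> real"
      using 3 that by (smt (verit) mult_left_mono norm_ge_zero pi_gt_zero power_mono)
    then have "{u :: real \<times> real. norm u < r \<and> pi * (norm u)\<^sup>2 \<le> t} = ball 0 r"
      by auto
    then show ?thesis
      using 3 r by (simp add: emeasure_lborel_ball_plane)
  qed
qed

lemma nn_integral_exp_neg_atLeast: "(\<integral>\<^sup>+ t. ennreal (exp (- t)) * indicator {a..} t \<partial>lborel) = ennreal (exp (- a))"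
proof -
  have "((\<lambda>x::real. exp (- x)) \<longlongrightarrow> 0) at_top"
    by (rule filterlim_compose[OF exp_at_bot filterlim_uminus_at_bot_at_top])
  then have "((\<lambda>x::real. - exp (- x)) \<longlongrightarrow> 0) at_top"
    using tendsto_minus by fastforce
  then have "(\<integral>\<^sup>+ t. ennreal (exp (- t)) * indicator {a..} t \<partial>lborel) = 0 - (- exp (- a))"
    by (intro nn_integral_FTC_atLeast) (auto intro!: derivative_eq_intros)
  then show ?thesis
    by simp
qed

lemma nn_integral_mult_exp_neg_Icc:
  assumes "a \<ge> 0"
  shows "(\<integral>\<^sup>+ t. ennreal (t * exp (- t)) * indicator {0..a} t \<partial>lborel) = ennreal (1 - (a + 1) * exp (- a))"
proof -
  have "(\<integral>\<^sup>+ t. ennreal (t * exp (- t)) * indicator {0..a} t \<partial>lborel)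
      = (\<lambda>t. - (t + 1) * exp (- t)) a - (\<lambda>t. - (t + 1) * exp (- t)) 0"
    by (rule nn_integral_FTC_Icc) (auto intro!: derivative_eq_intros simp: assms algebra_simps)
  then show ?thesis
    by (simp add: algebra_simps)
qed

text \<open>Since \<open>ennreal\<close> maps negative reals to \<open>0\<close>, the integrand below vanishes for \<open>t < 0\<close>.\<close>

lemma nn_integral_exp_neg_mult_min:
  assumes a: "a \<ge> 0"
  shows "(\<integral>\<^sup>+ t. ennreal (exp (- t)) * ennreal (min t a) \<partial>lborel) = ennreal (1 - exp (- a))"
proof -
  have "AE t in lborel. ennreal (exp (- t)) * ennreal (min t a)
      = ennreal (t * exp (- t)) * indicator {0..a} t + ennreal a * (ennreal (exp (- t)) * indicator {a..} t)"
    using AE_lborel_singleton[of a]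
    by eventually_elim (use a in \<open>auto simp: indicator_def ennreal_neg ennreal_mult[symmetric] mult.commute\<close>)
  then have "(\<integral>\<^sup>+ t. ennreal (exp (- t)) * ennreal (min t a) \<partial>lborel)
      = (\<integral>\<^sup>+ t. ennreal (t * exp (- t)) * indicator {0..a} t
          + ennreal a * (ennreal (exp (- t)) * indicator {a..} t) \<partial>lborel)"
    by (rule nn_integral_cong_AE)
  also have "\<dots> = (\<integral>\<^sup>+ t. ennreal (t * exp (- t)) * indicator {0..a} t \<partial>lborel)
        + ennreal a * (\<integral>\<^sup>+ t. ennreal (exp (- t)) * indicator {a..} t \<partial>lborel)"
    by (simp add: nn_integral_add nn_integral_cmult)
  also have "\<dots> = ennreal (1 - (a + 1) * exp (- a) + a * exp (- a))"
  proof -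
    have "(a + 1) * exp (- a) \<le> 1"
      using exp_ge_add_one_self[of a] by (simp add: exp_minus field_simps)
    then show ?thesis
      using a by (simp add: nn_integral_mult_exp_neg_Icc nn_integral_exp_neg_atLeast ennreal_mult ennreal_plus)
  qed
  finally show ?thesis
    by (simp add: algebra_simps)
qed

lemma nn_integral_gaussian_ball:
  assumes r: "r \<ge> 0"
  shows "(\<integral>\<^sup>+ u. indicator (ball (0 :: real \<times> real) r) u * ennreal (exp (- (pi * (norm u)\<^sup>2))) \<partial>lborel)
    = ennreal (1 - exp (- (pi * r\<^sup>2)))"
proof -
  define S where "S t = {u :: real \<times> real. norm u < r \<and> pi * (norm u)\<^sup>2 \<le> t}" for t
  define Q where "Q u t = ennreal (if norm u < r \<and> pi * (norm u)\<^sup>2 \<le> t then exp (- t) else 0)"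
    for u :: "real \<times> real" and t :: real
  have Q_measurable: "(\<lambda>(u, t). Q u t) \<in> borel_measurable (lborel \<Otimes>\<^sub>M lborel)"
    unfolding Q_def by measurable
  have S_sets: "S t \<in> sets lborel" for t
    unfolding S_def by measurable
  have layer: "indicator (ball 0 r) u * ennreal (exp (- (pi * (norm u)\<^sup>2))) = (\<integral>\<^sup>+ t. Q u t \<partial>lborel)" for u
  proof -
    have "(\<integral>\<^sup>+ t. Q u t \<partial>lborel)
        = indicator (ball 0 r) u * (\<integral>\<^sup>+ t. ennreal (exp (- t)) * indicator {pi * (norm u)\<^sup>2..} t \<partial>lborel)"
      by (cases "norm u < r") (auto simp: Q_def indicator_def intro!: nn_integral_cong)
    then show ?thesis
      by (simp add: nn_integral_exp_neg_atLeast)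
  qed
  have slice: "(\<integral>\<^sup>+ u. Q u t \<partial>lborel) = ennreal (exp (- t)) * ennreal (min t (pi * r\<^sup>2))" for t
  proof -
    have "(\<integral>\<^sup>+ u. Q u t \<partial>lborel) = (\<integral>\<^sup>+ u. ennreal (exp (- t)) * indicator (S t) u \<partial>lborel)"
      by (rule nn_integral_cong) (auto simp: S_def Q_def indicator_def)
    also have "\<dots> = ennreal (exp (- t)) * emeasure lborel (S t)"
      by (rule nn_integral_cmult_indicator[OF S_sets])
    finally show ?thesis
      using r by (simp add: S_def emeasure_ball_gaussian_sublevel)
  qed
  have "(\<integral>\<^sup>+ u. indicator (ball (0 :: real \<times> real) r) u * ennreal (exp (- (pi * (norm u)\<^sup>2))) \<partial>lborel)
      = (\<integral>\<^sup>+ u. \<integral>\<^sup>+ t. Q u t \<partial>lborel \<partial>lborel)"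
    using layer by (rule nn_integral_cong)
  also have "\<dots> = (\<integral>\<^sup>+ t. \<integral>\<^sup>+ u. Q u t \<partial>lborel \<partial>lborel)"
    by (rule lborel_pair.Fubini'[OF Q_measurable, symmetric])
  also have "\<dots> = ennreal (1 - exp (- (pi * r\<^sup>2)))"
    using r by (simp add: slice nn_integral_exp_neg_mult_min)
  finally show ?thesis .
qed

section \<open>A local mean value inequality for the STFT\<close>

lemma norm_stft_rotation_eq_bargmann:
  assumes "g \<in> borel_measurable borel"
  shows "norm (stft g ((a, b) + rotation (- \<theta>) u))
    = 2 powr (1/4) * exp (- (pi * (norm u)\<^sup>2 / 2)) * norm (bargmann g a b (cis \<theta> * Complex (fst u) (- snd u)))"
proof -
  define v where "v = rotation (- \<theta>) u"
  have "(fst v)\<^sup>2 + (snd v)\<^sup>2 = (norm u)\<^sup>2"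
    using norm_rotation[of "- \<theta>" u] by (simp add: v_def norm_prod_def)
  then show ?thesis
    using norm_stft_eq_bargmann[OF assms, of a "fst v" b "snd v"]
    by (simp add: v_def plus_prod_def cis_mult_Complex_conj_rotation)
qed

lemma norm_stft_le_circle_average:
  assumes [measurable]: "g \<in> borel_measurable borel" and "integrable lborel g"
  shows "ennreal (exp (- (pi * (norm u)\<^sup>2 / 2)) * norm (stft g w))
    \<le> (\<integral>\<^sup>+ s. indicator {0..1::real} s * ennreal (norm (stft g (w + rotation (- (2 * pi * s)) u))) \<partial>lborel)"
proof -
  obtain a b where w: "w = (a, b)"
    by (cases w)
  define \<xi> where "\<xi> = Complex (fst u) (- snd u)"
  define C where "C = 2 powr (1/4) * exp (- (pi * (norm u)\<^sup>2 / 2))"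
  have "C \<ge> 0"
    by (simp add: C_def)
  have circle_integrable: "integrable lborel (\<lambda>s. indicator {0..1::real} s *\<^sub>R bargmann g a b (cis (2 * pi * s) * \<xi>))"
    using bargmann_circle_mean(1)[OF assms] by (simp add: set_integrable_def)
  then have [measurable]: "(\<lambda>s. indicator {0..1::real} s *\<^sub>R bargmann g a b (cis (2 * pi * s) * \<xi>)) \<in> borel_measurable lborel"
    by (rule borel_measurable_integrable)
  have "ennreal (exp (- (pi * (norm u)\<^sup>2 / 2)) * norm (stft g w)) = ennreal C * norm (bargmann g a b 0)"
    using norm_stft_rotation_eq_bargmann[OF assms(1), of a b 0 0]
    by (simp add: w C_def ennreal_mult mult_ac flip: zero_complex.code)
  also have "\<dots> \<le> ennreal C
      * (\<integral>\<^sup>+ s. ennreal (norm (indicator {0..1::real} s *\<^sub>R bargmann g a b (cis (2 * pi * s) * \<xi>))) \<partial>lborel)"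
    using integral_norm_bound_ennreal[OF circle_integrable] bargmann_circle_mean(2)[OF assms]
    by (intro mult_left_mono) (simp_all add: set_lebesgue_integral_def)
  also have "\<dots> = (\<integral>\<^sup>+ s. ennreal C * ennreal (norm (indicator {0..1::real} s *\<^sub>R bargmann g a b (cis (2 * pi * s) * \<xi>))) \<partial>lborel)"
    by (rule nn_integral_cmult[symmetric]) measurable
  also have "\<dots> = (\<integral>\<^sup>+ s. indicator {0..1::real} s * ennreal (norm (stft g (w + rotation (- (2 * pi * s)) u))) \<partial>lborel)"
    using \<open>C \<ge> 0\<close> norm_stft_rotation_eq_bargmann[OF assms(1), of a b "2 * pi * _" u]
    by (intro nn_integral_cong) (simp add: w \<xi>_def C_def indicator_def ennreal_mult[symmetric])
  finally show ?thesis .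
qed

lemma nn_integral_lborel_translate:
  fixes f :: "'a::euclidean_space \<Rightarrow> ennreal"
  assumes "f \<in> borel_measurable borel"
  shows "(\<integral>\<^sup>+ u. f (w + u) \<partial>lborel) = (\<integral>\<^sup>+ z. f z \<partial>lborel)"
  using nn_integral_distr[of "(+) w" lborel borel f] assms by (simp add: lborel_distr_plus)

text \<open>Weight the circle estimate by $e^{-\pi|u|^2}$ over the disc $|u| < r$; averaging over
  rotations then turns its right-hand side back into an integral over the disc.\<close>

lemma norm_stft_le_ball_integral:
  assumes [measurable]: "g \<in> borel_measurable borel" and int: "integrable lborel g" and r: "r \<ge> 0"
  shows "ennreal ((1 - exp (- (pi * r\<^sup>2))) * norm (stft g w))
    \<le> (\<integral>\<^sup>+ z. indicator (ball w r) z * ennreal (norm (stft g z)) \<partial>lborel)"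
proof -
  define \<Phi> where "\<Phi> u = indicator (ball 0 r) u * ennreal (exp (- (pi * (norm u)\<^sup>2 / 2)))
      * ennreal (norm (stft g (w + u)))" for u :: "real \<times> real"
  have [measurable]: "ball (c :: real \<times> real) r \<in> sets borel" for c
    by simp
  have [measurable]: "\<Phi> \<in> borel_measurable borel"
    unfolding \<Phi>_def by measurable
  have "ennreal ((1 - exp (- (pi * r\<^sup>2))) * norm (stft g w))
      = (\<integral>\<^sup>+ u. ennreal (norm (stft g w))
          * (indicator (ball (0 :: real \<times> real) r) u * ennreal (exp (- (pi * (norm u)\<^sup>2)))) \<partial>lborel)"
    using r by (subst nn_integral_cmult) (auto simp: nn_integral_gaussian_ball mult.commute ennreal_mult)
  also have "\<dots> \<le> (\<integral>\<^sup>+ u. indicator (ball 0 r) u * ennreal (exp (- (pi * (norm u)\<^sup>2 / 2)))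
      * (\<integral>\<^sup>+ s. indicator {0..1::real} s * ennreal (norm (stft g (w + rotation (- (2 * pi * s)) u))) \<partial>lborel) \<partial>lborel)"
  proof (intro nn_integral_mono)
    fix u :: "real \<times> real"
    have "ennreal (norm (stft g w)) * ennreal (exp (- (pi * (norm u)\<^sup>2)))
        = ennreal (exp (- (pi * (norm u)\<^sup>2 / 2))) * ennreal (exp (- (pi * (norm u)\<^sup>2 / 2)) * norm (stft g w))"
      by (simp add: mult_ac flip: ennreal_mult exp_add)
    then show "ennreal (norm (stft g w)) * (indicator (ball 0 r) u * ennreal (exp (- (pi * (norm u)\<^sup>2))))
        \<le> indicator (ball 0 r) u * ennreal (exp (- (pi * (norm u)\<^sup>2 / 2)))
          * (\<integral>\<^sup>+ s. indicator {0..1::real} s * ennreal (norm (stft g (w + rotation (- (2 * pi * s)) u))) \<partial>lborel)"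
      using norm_stft_le_circle_average[OF assms(1,2), of u w]
      by (simp add: indicator_def mult_left_mono mult_ac)
  qed
  also have "\<dots> = (\<integral>\<^sup>+ u. \<integral>\<^sup>+ s. indicator {0..1::real} s * \<Phi> (rotation (- (2 * pi * s)) u) \<partial>lborel \<partial>lborel)"
    by (intro nn_integral_cong, subst nn_integral_cmult[symmetric], measurable)
      (auto intro!: nn_integral_cong simp: \<Phi>_def indicator_def)
  also have "\<dots> = (\<integral>\<^sup>+ u. \<Phi> u \<partial>lborel)"
    by (rule nn_integral_lborel_rotation_average[symmetric]) measurable
  also have "\<dots> \<le> (\<integral>\<^sup>+ u. indicator (ball w r) (w + u) * ennreal (norm (stft g (w + u))) \<partial>lborel)"
  proof (intro nn_integral_mono)
    fix u :: "real \<times> real"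
    have "ennreal (exp (- (pi * (norm u)\<^sup>2 / 2))) * y \<le> y" for y :: ennreal
      using mult_right_mono[of "ennreal (exp (- (pi * (norm u)\<^sup>2 / 2)))" 1 y] by simp
    then show "\<Phi> u \<le> indicator (ball w r) (w + u) * ennreal (norm (stft g (w + u)))"
      by (simp add: \<Phi>_def indicator_def dist_norm)
  qed
  also have "\<dots> = (\<integral>\<^sup>+ z. indicator (ball w r) z * ennreal (norm (stft g z)) \<partial>lborel)"
    by (rule nn_integral_lborel_translate) measurable
  finally show ?thesis .
qed

section \<open>Concentration on sets of small density\<close>

lemma sigma_finite_measure_lebesgue: "sigma_finite_measure (lebesgue :: 'a::euclidean_space measure)"
proof -
  obtain A :: "'a set set" where
    "countable A" "A \<subseteq> sets lborel" "\<Union>A = space lborel" "\<forall>a\<in>A. emeasure lborel a \<noteq> \<infinity>"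
    using sigma_finite_lborel unfolding sigma_finite_measure_def by blast
  then show ?thesis
    unfolding sigma_finite_measure_def by (intro exI[of _ A]) auto
qed

lemma pred_dist_less_lebesgue_pair [measurable]:
  "Measurable.pred ((lebesgue :: 'a::euclidean_space measure) \<Otimes>\<^sub>M lebesgue) (\<lambda>p. dist (fst p) (snd p) < r)"
proof -
  have id: "(\<lambda>x. x) \<in> (lebesgue :: 'a measure) \<rightarrow>\<^sub>M borel"
    by (rule measurable_completion) simp
  have [measurable]: "fst \<in> borel_measurable ((lebesgue :: 'a measure) \<Otimes>\<^sub>M (lebesgue :: 'a measure))"
    "snd \<in> borel_measurable ((lebesgue :: 'a measure) \<Otimes>\<^sub>M (lebesgue :: 'a measure))"
    using measurable_comp[OF measurable_fst id] measurable_comp[OF measurable_snd id]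
    by (simp_all add: comp_def)
  show ?thesis
    by measurable
qed

lemma nn_integral_concentration_le:
  fixes F :: "'a::euclidean_space \<Rightarrow> ennreal" and \<Delta> :: "'a set" and c M :: ennreal
  assumes [measurable]: "F \<in> borel_measurable lebesgue" "\<Delta> \<in> sets lebesgue"
    and local_mean: "\<And>w. c * F w \<le> (\<integral>\<^sup>+ z. indicator (ball w r) z * F z \<partial>lebesgue)"
    and density: "\<And>z. emeasure lebesgue (\<Delta> \<inter> ball z r) \<le> M"
  shows "c * (\<integral>\<^sup>+ z. indicator \<Delta> z * F z \<partial>lebesgue) \<le> M * (\<integral>\<^sup>+ z. F z \<partial>lebesgue)"
proof -
  interpret pair_sigma_finite "lebesgue :: 'a measure" "lebesgue :: 'a measure"
    by (simp add: pair_sigma_finite_def sigma_finite_measure_lebesgue)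
  have [measurable]: "ball w r \<in> sets lebesgue" for w :: 'a
    by (intro fmeasurableD lmeasurable_ball)
  define J where "J w z = indicator \<Delta> w * (indicator {p. dist (fst p) (snd p) < r} (w, z) * F z)" for w z :: 'a
  have J_measurable: "(\<lambda>(w, z). J w z) \<in> borel_measurable (lebesgue \<Otimes>\<^sub>M lebesgue)"
    unfolding J_def by measurable
  have "c * (\<integral>\<^sup>+ z. indicator \<Delta> z * F z \<partial>lebesgue) = (\<integral>\<^sup>+ w. indicator \<Delta> w * (c * F w) \<partial>lebesgue)"
    by (subst nn_integral_cmult[symmetric]) (auto simp: mult_ac)
  also have "\<dots> \<le> (\<integral>\<^sup>+ w. \<integral>\<^sup>+ z. J w z \<partial>lebesgue \<partial>lebesgue)"
  proof (rule nn_integral_mono)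
    fix w
    have "indicator \<Delta> w * (c * F w) \<le> indicator \<Delta> w * (\<integral>\<^sup>+ z. indicator (ball w r) z * F z \<partial>lebesgue)"
      by (rule mult_left_mono[OF local_mean]) simp
    also have "\<dots> = (\<integral>\<^sup>+ z. indicator \<Delta> w * (indicator (ball w r) z * F z) \<partial>lebesgue)"
      by (rule nn_integral_cmult[symmetric]) measurable
    also have "\<dots> = (\<integral>\<^sup>+ z. J w z \<partial>lebesgue)"
      unfolding J_def by (auto intro!: nn_integral_cong simp: indicator_def)
    finally show "indicator \<Delta> w * (c * F w) \<le> (\<integral>\<^sup>+ z. J w z \<partial>lebesgue)" .
  qed
  also have "\<dots> = (\<integral>\<^sup>+ z. \<integral>\<^sup>+ w. J w z \<partial>lebesgue \<partial>lebesgue)"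
    by (rule Fubini'[OF J_measurable, symmetric])
  also have "\<dots> \<le> (\<integral>\<^sup>+ z. M * F z \<partial>lebesgue)"
  proof (rule nn_integral_mono)
    fix z
    have "(\<integral>\<^sup>+ w. J w z \<partial>lebesgue) = F z * emeasure lebesgue (\<Delta> \<inter> ball z r)"
      unfolding J_def
      by (subst nn_integral_cmult_indicator[symmetric])
        (auto intro!: nn_integral_cong simp: indicator_def dist_commute)
    also have "\<dots> \<le> F z * M"
      by (rule mult_left_mono[OF density]) simp
    finally show "(\<integral>\<^sup>+ w. J w z \<partial>lebesgue) \<le> M * F z"
      by (simp add: mult.commute)
  qed
  also have "\<dots> = M * (\<integral>\<^sup>+ z. F z \<partial>lebesgue)"
    by (rule nn_integral_cmult) measurable
  finally show ?thesis .
qed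

lemma integrable_stft_integrand:
  assumes "integrable lebesgue f"
  shows "integrable lebesgue
    (\<lambda>t. f t * cnj (gauss_window (t - x)) * exp (- 2 * pi * \<i> * complex_of_real (\<omega> * t)))"
proof (rule Bochner_Integration.integrable_bound)
  show "integrable lebesgue (\<lambda>t. complex_of_real (2 powr (1/4)) * f t)"
    using assms by (rule integrable_mult_right)
  have [measurable]: "f \<in> borel_measurable lebesgue"
    using assms by (rule borel_measurable_integrable)
  have [measurable]: "(\<lambda>t. t) \<in> borel_measurable lebesgue"
    by (rule measurable_completion) simp
  show "(\<lambda>t. f t * cnj (gauss_window (t - x)) * exp (- 2 * pi * \<i> * complex_of_real (\<omega> * t)))
      \<in> borel_measurable lebesgue"
    by measurable
  have "2 powr (1/4) * exp (- pi * (t - x)\<^sup>2) \<le> 2 powr (1/4)" for t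
    by simp
  then show "AE t in lebesgue. norm (f t * cnj (gauss_window (t - x)) * exp (- 2 * pi * \<i> * complex_of_real (\<omega> * t)))
      \<le> norm (complex_of_real (2 powr (1/4)) * f t)"
    by (intro AE_I2) (simp add: gauss_window_def norm_mult norm_exp_eq_Re mult.commute mult_left_mono)
qed

lemma stft_diff:
  assumes "integrable lebesgue f" "integrable lebesgue h"
  shows "stft (\<lambda>t. f t - h t) z = stft f z - stft h z"
  using Bochner_Integration.integral_diff[OF integrable_stft_integrand[OF assms(1)] integrable_stft_integrand[OF assms(2)]]
  by (cases z) (simp add: stft_def ring_distribs)

lemma stft_eq_stft_borel:
  assumes "integrable lebesgue g"
  obtains g' where "g' \<in> borel_measurable borel" "integrable lborel g'" "stft g = stft g'"
proof -
  have [measurable]: "g \<in> borel_measurable lebesgue"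
    using assms by (rule borel_measurable_integrable)
  have "(\<lambda>x. Re (g x)) \<in> borel_measurable (completion lborel)"
    by measurable
  then obtain gr where [measurable]: "gr \<in> borel_measurable lborel" and gr: "AE x in lborel. Re (g x) = gr x"
    using completion_ex_borel_measurable_real by blast
  have "(\<lambda>x. Im (g x)) \<in> borel_measurable (completion lborel)"
    by measurable
  then obtain gi where [measurable]: "gi \<in> borel_measurable lborel" and gi: "AE x in lborel. Im (g x) = gi x"
    using completion_ex_borel_measurable_real by blast
  define g' where "g' x = complex_of_real (gr x) + \<i> * complex_of_real (gi x)" for x
  have g'_borel [measurable]: "g' \<in> borel_measurable lborel"
    unfolding g'_def by measurable
  have "AE x in lborel. g x = g' x"
    using gr gi by eventually_elim (simp add: g'_def complex_eq_iff)
  then have ae: "AE x in lebesgue. g x = g' x"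
    by (rule AE_completion)
  then have "integrable lborel g'"
    using integrable_cong_AE_imp[OF assms measurable_completion[OF g'_borel]] integrable_completion[OF g'_borel]
    by simp
  moreover have "stft g = stft g'"
  proof
    fix z :: "real \<times> real"
    have [measurable]: "g' \<in> borel_measurable lebesgue"
      by (rule measurable_completion[OF g'_borel])
    have [measurable]: "(\<lambda>t. t) \<in> borel_measurable lebesgue"
      by (rule measurable_completion) simp
    show "stft g z = stft g' z"
      unfolding stft_def using ae by (cases z) (simp, intro integral_cong_AE, measurable, auto)
  qed
  ultimately show ?thesis
    using that g'_borel by simp
qed

lemma
  assumes "\<Delta> \<in> sets lebesgue" and "R > 0"
  shows emeasure_inter_ball_le_nyquist_density:
      "emeasure lebesgue (\<Delta> \<inter> ball z (1 / R)) \<le> ennreal (nyquist_density \<Delta> R)"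
    and nyquist_density_nonneg: "nyquist_density \<Delta> R \<ge> 0"
proof -
  have finite: "\<Delta> \<inter> ball w (1 / R) \<in> fmeasurable lebesgue" for w
    using fmeasurable_Int_fmeasurable[OF lmeasurable_ball assms(1)] by (simp add: Int_commute)
  have "measure lebesgue (\<Delta> \<inter> ball w (1 / R)) \<le> measure lebesgue (ball w (1 / R))" for w
    using finite[of w] by (intro measure_mono_fmeasurable) auto
  also have "measure lebesgue (ball w (1 / R)) = pi * (1 / R)\<^sup>2" for w :: "real \<times> real"
    using emeasure_lborel_ball_plane[of "1 / R" w] \<open>R > 0\<close> by (simp add: measure_def)
  finally have "bdd_above (range (\<lambda>w. measure lebesgue (\<Delta> \<inter> ball w (1 / R))))"
    by (intro bdd_aboveI2) auto
  then have le: "measure lebesgue (\<Delta> \<inter> ball w (1 / R)) \<le> nyquist_density \<Delta> R" for w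
    unfolding nyquist_density_def by (rule cSUP_upper[rotated]) simp
  then show "emeasure lebesgue (\<Delta> \<inter> ball z (1 / R)) \<le> ennreal (nyquist_density \<Delta> R)"
    using finite[of z] by (simp add: emeasure_eq_measure2 ennreal_leI)
  show "nyquist_density \<Delta> R \<ge> 0"
    using le[of 0] measure_nonneg[of lebesgue] by (rule order_trans[rotated])
qed

lemma L1norm_proj: "L1norm (proj A g) = (\<integral>\<^sup>+ z. indicator A z * ennreal (norm (g z)) \<partial>lebesgue)"
  unfolding L1norm_def proj_def by (intro nn_integral_cong) (simp add: indicator_def)

lemma L1norm_proj_stft_le_nyquist_density:
  assumes g: "integrable lebesgue g" and \<Delta>: "\<Delta> \<in> sets lebesgue" and R: "R > 0"
  shows "ennreal (1 - exp (- pi / R\<^sup>2)) * L1norm (proj \<Delta> (stft g))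
    \<le> ennreal (nyquist_density \<Delta> R) * L1norm (stft g)"
proof -
  obtain g' where [measurable]: "g' \<in> borel_measurable borel" and "integrable lborel g'" and "stft g = stft g'"
    using stft_eq_stft_borel[OF g] .
  have [measurable]: "stft g' \<in> borel_measurable lebesgue"
    by (rule measurable_completion) measurable
  have "1 - exp (- pi / R\<^sup>2) = 1 - exp (- (pi * (1 / R)\<^sup>2))"
    by (simp add: power_divide)
  moreover have "ennreal ((1 - exp (- (pi * (1 / R)\<^sup>2))) * norm (stft g' w))
      \<le> (\<integral>\<^sup>+ z. indicator (ball w (1 / R)) z * ennreal (norm (stft g' z)) \<partial>lebesgue)" for w
    using norm_stft_le_ball_integral[OF \<open>g' \<in> borel_measurable borel\<close> \<open>integrable lborel g'\<close>, of "1 / R" w] R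
    by (simp add: nn_integral_completion)
  moreover note emeasure_inter_ball_le_nyquist_density[OF \<Delta> R]
  ultimately show ?thesis
    unfolding \<open>stft g = stft g'\<close> L1norm_proj unfolding L1norm_def
    by (intro nn_integral_concentration_le[OF _ \<Delta>]) (simp_all add: ennreal_mult)
qed

section \<open>Stability of the $L^1$ minimiser\<close>

lemma L1norm_eq_proj_add_proj_Compl:
  assumes [measurable]: "G \<in> borel_measurable lebesgue" "A \<in> sets lebesgue"
  shows "L1norm G = L1norm (proj A G) + L1norm (proj (- A) G)"
proof -
  have [measurable]: "- A \<in> sets lebesgue"
    using sets.compl_sets[OF assms(2)] by (simp add: Compl_eq_Diff_UNIV)
  show ?thesis
    unfolding L1norm_proj unfolding L1norm_def
    by (subst nn_integral_add[symmetric]) (auto intro!: nn_integral_cong simp: indicator_def)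
qed

lemma L1norm_diff_le:
  assumes [measurable]: "F \<in> borel_measurable lebesgue" "S \<in> borel_measurable lebesgue"
  shows "L1norm (\<lambda>z. F z - S z) \<le> L1norm F + L1norm S"
  unfolding L1norm_def
  by (subst nn_integral_add[symmetric]) (auto intro!: nn_integral_mono norm_triangle_ineq4 simp flip: ennreal_plus)

lemma L1norm_proj_diff_le:
  assumes [measurable]: "F \<in> borel_measurable lebesgue" "S \<in> borel_measurable lebesgue"
    "N \<in> borel_measurable lebesgue" "A \<in> sets lebesgue"
    and H: "H = proj A (\<lambda>z. F z + N z)"
    and closer: "L1norm (proj A (\<lambda>z. H z - S z)) \<le> L1norm (proj A (\<lambda>z. H z - F z))"
  shows "L1norm (proj A (\<lambda>z. F z - S z)) \<le> 2 * L1norm N"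
proof -
  have "norm (proj A (\<lambda>z. F z - S z) z)
      \<le> norm (proj A (\<lambda>z. H z - S z) z) + norm (proj A (\<lambda>z. H z - F z) z)" for z
    using norm_triangle_ineq4[of "F z + N z - S z" "N z"] by (simp add: H proj_def indicator_def)
  then have "L1norm (proj A (\<lambda>z. F z - S z))
      \<le> L1norm (proj A (\<lambda>z. H z - S z)) + L1norm (proj A (\<lambda>z. H z - F z))"
    unfolding L1norm_def
    by (subst nn_integral_add[symmetric]) (auto simp: H proj_def intro!: nn_integral_mono simp flip: ennreal_plus)
  also have "\<dots> \<le> 2 * L1norm (proj A (\<lambda>z. H z - F z))"
    using closer by (simp add: mult_2 add_right_mono)
  also have "L1norm (proj A (\<lambda>z. H z - F z)) \<le> L1norm N"
    unfolding L1norm_def H proj_def by (intro nn_integral_mono) (simp add: indicator_def)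
  finally show ?thesis
    by (simp add: mult_left_mono)
qed

lemma ennreal_add_le_of_concentration:
  fixes A B :: ennreal and c \<rho> e :: real
  assumes conc: "ennreal c * A \<le> ennreal \<rho> * (A + B)" and B: "B \<le> ennreal e"
    and "0 \<le> \<rho>" "\<rho> < c" and finite: "A + B < \<infinity>"
  shows "A + B \<le> ennreal (e * c / (c - \<rho>))"
proof -
  obtain a b where ab: "A = ennreal a" "B = ennreal b" "a \<ge> 0" "b \<ge> 0"
    using finite by (cases A; cases B) auto
  have "ennreal (c * a) \<le> ennreal (\<rho> * (a + b))"
    using conc \<open>0 \<le> \<rho>\<close> \<open>\<rho> < c\<close> ab by (simp add: ennreal_mult flip: ennreal_plus)
  then have "c * a \<le> \<rho> * (a + b)"
    using \<open>0 \<le> \<rho>\<close> ab by (simp add: ennreal_le_iff)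
  then have main: "(c - \<rho>) * (a + b) \<le> c * b"
    by (simp add: algebra_simps)
  show ?thesis
  proof (cases "e \<ge> 0")
    case True
    with B ab have "b \<le> e"
      by (simp add: ennreal_le_iff)
    with main \<open>0 \<le> \<rho>\<close> \<open>\<rho> < c\<close> have "(c - \<rho>) * (a + b) \<le> e * c"
      by (smt (verit) mult.commute mult_left_mono)
    with \<open>\<rho> < c\<close> have "a + b \<le> e * c / (c - \<rho>)"
      by (simp add: pos_le_divide_eq mult.commute)
    then show ?thesis
      using ab by (simp add: ennreal_leI flip: ennreal_plus)
  next
    case False
    with B ab have "b = 0"
      by (simp add: ennreal_neg)
    with main \<open>\<rho> < c\<close> ab have "a = 0"
      by (simp add: mult_le_0_iff)
    with ab \<open>b = 0\<close> show ?thesis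
      by simp
  qed
qed

theorem corollary2:
  fixes f \<sigma> :: "real \<Rightarrow> complex"
    and \<Delta> :: "(real \<times> real) set"
    and N H :: "real \<times> real \<Rightarrow> complex"
    and \<epsilon> R :: real
  assumes f: "f \<in> M1"
    and Delta: "\<Delta> \<in> sets lebesgue"
    and N: "integrable lebesgue N" "L1norm N \<le> ennreal \<epsilon>"
    and H: "H = proj (- \<Delta>) (\<lambda>z. stft f z + N z)"
    and R: "R > 0"
    and dens: "nyquist_density \<Delta> R < 1 - exp (- pi / R\<^sup>2)"
    and sigma: "\<sigma> \<in> M1"
    and argmin: "\<forall>h\<in>M1. L1norm (proj (- \<Delta>) (\<lambda>z. H z - stft \<sigma> z))
                         \<le> L1norm (proj (- \<Delta>) (\<lambda>z. H z - stft h z))"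
  shows "L1norm (stft (\<lambda>t. f t - \<sigma> t))
     \<le> ennreal (2 * \<epsilon> * (1 - exp (- pi / R\<^sup>2)) / (1 - exp (- pi / R\<^sup>2) - nyquist_density \<Delta> R))"
proof -
  define V where "V = (\<lambda>z. stft f z - stft \<sigma> z)"
  have [measurable]: "stft f \<in> borel_measurable lebesgue" "stft \<sigma> \<in> borel_measurable lebesgue"
    "N \<in> borel_measurable lebesgue"
    using f sigma N(1) by (auto simp: M1_def)
  have diff: "stft (\<lambda>t. f t - \<sigma> t) = V"
    using f sigma by (auto simp: M1_def V_def stft_diff)
  have split: "L1norm V = L1norm (proj \<Delta> V) + L1norm (proj (- \<Delta>) V)"
    unfolding V_def by (rule L1norm_eq_proj_add_proj_Compl[OF _ Delta]) measurable
  have concentrated: "ennreal (1 - exp (- pi / R\<^sup>2)) * L1norm (proj \<Delta> V) \<le> ennreal (nyquist_density \<Delta> R) * L1norm V"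
    using L1norm_proj_stft_le_nyquist_density[of "\<lambda>t. f t - \<sigma> t", OF _ Delta R] f sigma
    by (simp add: M1_def diff)
  have "L1norm (proj (- \<Delta>) V) \<le> 2 * L1norm N"
    unfolding V_def using argmin f sets.compl_sets[OF Delta]
    by (intro L1norm_proj_diff_le[OF _ _ _ _ H]) (auto simp: Compl_eq_Diff_UNIV)
  also have "\<dots> \<le> ennreal (2 * \<epsilon>)"
    using N(2) by (cases "\<epsilon> \<ge> 0") (auto simp: ennreal_mult ennreal_neg intro: mult_left_mono)
  finally have off_mask: "L1norm (proj (- \<Delta>) V) \<le> ennreal (2 * \<epsilon>)" .
  have "L1norm V < \<infinity>"
    using L1norm_diff_le[of "stft f" "stft \<sigma>"] f sigma by (auto simp: M1_def V_def order_le_less_trans)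
  then show ?thesis
    unfolding diff split
    by (intro ennreal_add_le_of_concentration[OF concentrated[unfolded split] off_mask
          nyquist_density_nonneg[OF Delta R] dens]) simp
qed

end
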